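(* Under the hypotheses and construction described in the context, the function $d$ is a metric on $S$ and satisfies $0\le d\le 3$.
   Context: $S$ is a compact Hausdorff topological Clifford semigroup (inverse semigroup with $xx^{-1}=x^{-1}x$ for all $x$, continuous multiplication and inversion) such that: (B1) $E(S)$ (idempotents, ordered by $e\le f\iff ef=e$, subspace topology) is a metrizable perfect semilattice; (B2) each $G_e:=\{x: xx^{-1}=e\}$ is compact metrizable; (B3) the functor $e\mapsto G_e$ is inverse-limit preserving. Elements of $S$ are written $(e,g)$ with $g\in G_e$; for $e\le f$, $\varphi_{f,e}\colon G_f\to G_e$, $x\mapsto ex$. Way-below: $x\ll y$ if for every nonempty up-directed $D$ whose supremum exists with $y\le \sup D$ there is $d\in D$ with $x\le d$; $x\ll y\Rightarrow x\le y$. A perfect semilattice is a compact Hausdorff topological semilattice in which every point has a neighbourhood basis of open subsemilattices; it is a complete continuous semilattice whose topology is the Lawson topology, so $\twoheaduparrow b:=\{e: b\ll e\}$ is open, and $E(S)$ has a minimum $0$. A basis of $E(S)$ is $\mathcal B\subseteq E(S)$ such that for each $x$, $\{b\in\mathcal B: b\ll x\}$ is up-directed with supremum $x$. Inverse-limit preserving: for every nonempty up-directed $D$ with $\sup D=e$, $g\mapsto(\varphi_{e,b}(g))_{b\in D}$ is an isomorphism of topological groups $G_e\to\varprojlim_{b\in D}G_b$. Construction: a compatible metric $\rho\le1$ on $E(S)$; a countable basis $\mathcal B=\{b_j\}_{j\ge1}$; for $b\in\mathcal B$ a compatible metric $d_b\le1$ on $G_b$, a point $c_b\in G_b$, a dense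 sequence $\{t_{b,k}\}_{k\ge1}\subseteq G_b$; $a_b(e):=\rho(e,E(S)\setminus\twoheaduparrow b)$ for $b\neq0$, $a_0\equiv1$; $\widehat\varphi_{e,b}=\varphi_{e,b}$ if $b\le e$, constant $c_b$ otherwise; $P_b((e,g),(f,h)) := |a_b(e)-a_b(f)| + \sum_{k\ge1}2^{-k}|a_b(e)d_b(\widehat\varphi_{e,b}(g),t_{b,k}) - a_b(f)d_b(\widehat\varphi_{f,b}(h),t_{b,k})|$, $d((e,g),(f,h)) := \rho(e,f)+\sum_{j\ge1}2^{-j}P_{b_j}((e,g),(f,h))$. *)

theory Defs
  imports "HOL-Analysis.Analysis"
begin

text \<open>The semigroup S is the whole carrier type 'a, with multiplication (*) and
  inversion given by the type class operation inverse.\<close>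

definition idems :: "'a::{semigroup_mult} set" where
  "idems = {e. e * e = e}"

definition sleq :: "'a::semigroup_mult \<Rightarrow> 'a \<Rightarrow> bool" where
  "sleq e f \<longleftrightarrow> e * f = e"

definition grp :: "'a::{semigroup_mult,inverse} \<Rightarrow> 'a set" where
  "grp e = {x. x * inverse x = e}"

definition clifford_inverse_semigroup :: "'a::{semigroup_mult,inverse} itself \<Rightarrow> bool" where
  "clifford_inverse_semigroup _ \<longleftrightarrow>
     (\<forall>x::'a. x * inverse x * x = x \<and> inverse x * x * inverse x = inverse x
        \<and> (\<forall>y. x * y * x = x \<and> y * x * y = y \<longrightarrow> y = inverse x)
        \<and> x * inverse x = inverse x * x)"

definition compact_hausdorff_topological_semigroup :: "'a::{semigroup_mult,inverse,topological_space} itself \<Rightarrow> bool" where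
  "compact_hausdorff_topological_semigroup _ \<longleftrightarrow>
     compact (UNIV::'a set) \<and> Hausdorff_space (euclidean::'a topology)
     \<and> continuous_on UNIV (\<lambda>p::'a\<times>'a. fst p * snd p)
     \<and> continuous_on UNIV (inverse::'a\<Rightarrow>'a)"

definition up_directed :: "'a::semigroup_mult set \<Rightarrow> bool" where
  "up_directed D \<longleftrightarrow> D \<noteq> {} \<and> (\<forall>x\<in>D. \<forall>y\<in>D. \<exists>z\<in>D. sleq x z \<and> sleq y z)"

definition is_sup :: "'a::semigroup_mult set \<Rightarrow> 'a \<Rightarrow> bool" where
  "is_sup D s \<longleftrightarrow> s \<in> idems \<and> (\<forall>x\<in>D. sleq x s)
      \<and> (\<forall>u\<in>idems. (\<forall>x\<in>D. sleq x u) \<longrightarrow> sleq s u)"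

definition way_below :: "'a::semigroup_mult \<Rightarrow> 'a \<Rightarrow> bool" where
  "way_below x y \<longleftrightarrow> (\<forall>D s. D \<subseteq> idems \<and> D \<noteq> {} \<and> up_directed D \<and> is_sup D s \<and> sleq y s
      \<longrightarrow> (\<exists>d\<in>D. sleq x d))"

definition perfect_semilattice_E :: "'a::{semigroup_mult,topological_space} itself \<Rightarrow> bool" where
  "perfect_semilattice_E _ \<longleftrightarrow>
     compact (idems::'a set) \<and> Hausdorff_space (top_of_set (idems::'a set))
     \<and> (\<forall>e\<in>(idems::'a set). \<forall>f\<in>idems. e * f \<in> idems \<and> e * f = f * e)
     \<and> continuous_on (idems \<times> idems) (\<lambda>p::'a\<times>'a. fst p * snd p)
     \<and> (\<forall>e\<in>(idems::'a set). \<forall>U. openin (top_of_set idems) U \<and> e \<in> U \<longrightarrow>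
          (\<exists>V. openin (top_of_set idems) V \<and> e \<in> V \<and> V \<subseteq> U \<and> (\<forall>x\<in>V. \<forall>y\<in>V. x * y \<in> V)))"

definition is_basis :: "'a::semigroup_mult set \<Rightarrow> bool" where
  "is_basis B \<longleftrightarrow> B \<subseteq> idems \<and>
     (\<forall>x\<in>idems. up_directed {b\<in>B. way_below b x} \<and> is_sup {b\<in>B. way_below b x} x)"

text \<open>Inverse-limit preservation (B3): for nonempty up-directed D with sup e, the map
  g \<mapsto> (bg)_{b\<in>D} is an isomorphism of topological groups onto the inverse limit
  (a subspace of the product of the groups G_b).\<close>
definition inv_limit :: "'a::{semigroup_mult,inverse} set \<Rightarrow> ('a \<Rightarrow> 'a) set" where
  "inv_limit D = {x \<in> PiE D grp. \<forall>b\<in>D. \<forall>b'\<in>D. sleq b' b \<longrightarrow> b' * x b = x b'}"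

definition inverse_limit_preserving :: "'a::{semigroup_mult,inverse,topological_space} itself \<Rightarrow> bool" where
  "inverse_limit_preserving _ \<longleftrightarrow>
     (\<forall>(D::'a set) e. D \<subseteq> idems \<and> D \<noteq> {} \<and> up_directed D \<and> is_sup D e \<longrightarrow>
        (let f = (\<lambda>g. restrict (\<lambda>b. b * g) D) in
          homeomorphic_map (top_of_set (grp e))
             (subtopology (product_topology (\<lambda>b. top_of_set (grp b)) D) (inv_limit D)) f
          \<and> f ` grp e = inv_limit D
          \<and> (\<forall>g\<in>grp e. \<forall>h\<in>grp e. f (g * h) = (\<lambda>b\<in>D. f g b * f h b))))"

definition compatible_metric :: "'a::topological_space set \<Rightarrow> ('a \<Rightarrow> 'a \<Rightarrow> real) \<Rightarrow> bool" where
  "compatible_metric A m \<longleftrightarrow> Metric_space A m \<and> Metric_space.mtopology A m = top_of_set A"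

definition pdist :: "('a \<Rightarrow> 'a \<Rightarrow> real) \<Rightarrow> 'a \<Rightarrow> 'a set \<Rightarrow> real" where
  "pdist m x A = Inf ((\<lambda>a. m x a) ` A)"

text \<open>a_b(e); b is the minimum 0 of E(S) iff it is below every idempotent.\<close>
definition acoef :: "('a::semigroup_mult \<Rightarrow> 'a \<Rightarrow> real) \<Rightarrow> 'a \<Rightarrow> 'a \<Rightarrow> real" where
  "acoef \<rho> b e = (if (\<forall>x\<in>idems. sleq b x) then 1
                   else pdist \<rho> e (idems - {x\<in>idems. way_below b x}))"

definition phat :: "('a \<Rightarrow> 'a) \<Rightarrow> 'a::{semigroup_mult} \<Rightarrow> 'a \<Rightarrow> 'a \<Rightarrow> 'a" where
  "phat c e b g = (if sleq b e then b * g else c b)"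

text \<open>Element x is written (e,g) with e = x x^{-1} and g = x.\<close>
definition Pb :: "('a::{semigroup_mult,inverse} \<Rightarrow> 'a \<Rightarrow> real) \<Rightarrow> ('a \<Rightarrow> 'a \<Rightarrow> 'a \<Rightarrow> real)
     \<Rightarrow> ('a \<Rightarrow> 'a) \<Rightarrow> ('a \<Rightarrow> nat \<Rightarrow> 'a) \<Rightarrow> 'a \<Rightarrow> 'a \<Rightarrow> 'a \<Rightarrow> real" where
  "Pb \<rho> db c t b x y =
     (let e = x * inverse x; f = y * inverse y in
       \<bar>acoef \<rho> b e - acoef \<rho> b f\<bar>
       + (\<Sum>k. (1/2) ^ Suc k *
            \<bar>acoef \<rho> b e * db b (phat c e b x) (t b (Suc k))
             - acoef \<rho> b f * db b (phat c f b y) (t b (Suc k))\<bar>))"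

definition dmet :: "('a::{semigroup_mult,inverse} \<Rightarrow> 'a \<Rightarrow> real) \<Rightarrow> (nat \<Rightarrow> 'a) \<Rightarrow> ('a \<Rightarrow> 'a \<Rightarrow> 'a \<Rightarrow> real)
     \<Rightarrow> ('a \<Rightarrow> 'a) \<Rightarrow> ('a \<Rightarrow> nat \<Rightarrow> 'a) \<Rightarrow> 'a \<Rightarrow> 'a \<Rightarrow> real" where
  "dmet \<rho> bs db c t x y =
     \<rho> (x * inverse x) (y * inverse y) + (\<Sum>j. (1/2) ^ Suc j * Pb \<rho> db c t (bs (Suc j)) x y)"

end

theory Submission
  imports Defs
begin

text \<open>The distance \<open>d\<close> is \<open>\<rho>\<close> on the idempotent part plus a weighted series of the pseudometrics
  \<open>P\<^sub>b\<close>, each bounded by \<open>2\<close>, so symmetry, the triangle inequality and \<open>d \<le> 3\<close> hold termwise.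
  Separation is the real content. If \<open>d(x, y) = 0\<close> then \<open>x\<close> and \<open>y\<close> lie in the same group \<open>G\<^sub>e\<close>,
  and for each basic \<open>b \<ll> e\<close> the coefficient \<open>a\<^sub>b(e)\<close> is positive, because \<open>\<twoheaduparrow>b\<close> is open in
  the perfect semilattice \<open>E(S)\<close>; hence \<open>bx\<close> and \<open>by\<close> have the same distances to the dense
  sequence \<open>t\<^sub>b\<close> and coincide. Since \<open>e\<close> is the directed supremum of these \<open>b\<close>, (B3) gives
  \<open>x = y\<close>.\<close>

lemma sleq_trans: "sleq a b \<Longrightarrow> sleq b c \<Longrightarrow> sleq a c"
  unfolding sleq_def by (metis mult.assoc)

lemma sleq_refl: "e \<in> idems \<Longrightarrow> sleq e e"
  unfolding sleq_def idems_def by simp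

lemma perfect_semilattice_ED:
  assumes "perfect_semilattice_E TYPE('a::{semigroup_mult,topological_space})"
  shows "compact_space (top_of_set (idems::'a set))"
    and "Hausdorff_space (top_of_set (idems::'a set))"
    and "\<And>e f. e \<in> (idems::'a set) \<Longrightarrow> f \<in> idems \<Longrightarrow> e * f \<in> idems"
    and "\<And>e f. e \<in> (idems::'a set) \<Longrightarrow> f \<in> idems \<Longrightarrow> e * f = f * e"
    and "continuous_on ((idems::'a set) \<times> idems) (\<lambda>p. fst p * snd p)"
    and "\<And>e U. e \<in> (idems::'a set) \<Longrightarrow> openin (top_of_set idems) U \<Longrightarrow> e \<in> U \<Longrightarrow>
        \<exists>V. openin (top_of_set idems) V \<and> e \<in> V \<and> V \<subseteq> U \<and> (\<forall>x\<in>V. \<forall>y\<in>V. x * y \<in> V)"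
  using assms unfolding perfect_semilattice_E_def by (auto simp: compact_space_subtopology)

lemma continuous_map_idems_mult_right:
  assumes "perfect_semilattice_E TYPE('a::{semigroup_mult,topological_space})" "w \<in> (idems::'a set)"
  shows "continuous_map (top_of_set (idems::'a set)) (top_of_set idems) (\<lambda>x. x * w)"
proof -
  have "continuous_on idems (\<lambda>x::'a. fst (x, w) * snd (x, w))"
    by (rule continuous_on_compose2[OF perfect_semilattice_ED(5)[OF assms(1)]])
      (use assms(2) in \<open>auto intro!: continuous_intros\<close>)
  then show ?thesis using perfect_semilattice_ED(3)[OF assms(1) _ assms(2)] by auto
qed

lemma closedin_sleq_below:
  assumes "perfect_semilattice_E TYPE('a::{semigroup_mult,topological_space})" "u \<in> (idems::'a set)"
  shows "closedin (top_of_set (idems::'a set)) {x\<in>idems. sleq x u}"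
  using closedin_continuous_maps_eq[OF perfect_semilattice_ED(2)[OF assms(1)]
      continuous_map_idems_mult_right[OF assms] continuous_map_id]
  by (simp add: sleq_def)

lemma closedin_sleq_above:
  assumes "perfect_semilattice_E TYPE('a::{semigroup_mult,topological_space})" "v \<in> (idems::'a set)"
  shows "closedin (top_of_set (idems::'a set)) {x\<in>idems. sleq v x}"
proof -
  have "closedin (top_of_set (idems::'a set)) {x\<in>topspace (top_of_set idems). x * v = (\<lambda>x. v) x}"
    by (rule closedin_continuous_maps_eq[OF perfect_semilattice_ED(2)[OF assms(1)]
          continuous_map_idems_mult_right[OF assms]])
      (use assms(2) in auto)
  moreover have "{x\<in>topspace (top_of_set idems). x * v = (\<lambda>x. v) x} = {x\<in>idems. sleq v x}"
    using perfect_semilattice_ED(4)[OF assms(1) _ assms(2)] by (auto simp: sleq_def)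
  ultimately show ?thesis by simp
qed

lemma up_directed_finite_upper_bound:
  assumes "finite G" "G \<subseteq> D" "up_directed D"
  shows "\<exists>z\<in>D. \<forall>g\<in>G. sleq g z"
  using assms
proof (induction G rule: finite_induct)
  case empty
  then show ?case unfolding up_directed_def by auto
next
  case (insert x F)
  then obtain z where z: "z \<in> D" "\<forall>g\<in>F. sleq g z" by auto
  obtain z' where "z' \<in> D" "sleq x z'" "sleq z z'"
    using insert.prems z(1) unfolding up_directed_def by blast
  then show ?case using z sleq_trans by blast
qed

text \<open>Compactness: otherwise the closed sets of points of \<open>idems - U\<close> lying between \<open>d \<in> D\<close>
  and the supremum would have the finite intersection property, and a common point would be a
  smaller upper bound of \<open>D\<close> outside \<open>U\<close>.\<close>
lemma up_directed_meets_nhd_of_sup: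
  assumes B1: "perfect_semilattice_E TYPE('a::{semigroup_mult,topological_space})"
    and D: "D \<subseteq> (idems::'a set)" "up_directed D" "is_sup D s"
    and U: "openin (top_of_set idems) U" "s \<in> U"
  shows "\<exists>d\<in>D. d \<in> U"
proof (rule ccontr)
  assume outside: "\<not> (\<exists>d\<in>D. d \<in> U)"
  have sI: "s \<in> idems" using D(3) unfolding is_sup_def by auto
  define F where "F d = (idems - U) \<inter> {x\<in>idems. sleq d x} \<inter> {x\<in>idems. sleq x s}" for d
  have closed: "closedin (top_of_set idems) (F d)" if "d \<in> D" for d
  proof -
    have "closedin (top_of_set idems) (idems - U)"
      using closedin_diff[OF closedin_topspace U(1)] by simp
    moreover have "d \<in> idems" using that D(1) by blast
    ultimately show ?thesis unfolding F_def
      by (intro closedin_Int closedin_sleq_above[OF B1] closedin_sleq_below[OF B1 sI])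
  qed
  have fip: "\<Inter>\<F> \<noteq> {}" if "finite \<F>" "\<F> \<subseteq> F ` D" for \<F>
  proof -
    from finite_subset_image[OF that] obtain G where G: "G \<subseteq> D" "finite G" "\<F> = F ` G"
      by blast
    obtain z where z: "z \<in> D" "\<forall>g\<in>G. sleq g z"
      using up_directed_finite_upper_bound[OF G(2,1) D(2)] by blast
    have "z \<in> idems" "z \<notin> U" "sleq z s"
      using z(1) outside D(1,3) unfolding is_sup_def by auto
    then have "z \<in> \<Inter>\<F>" using z(2) G(3) unfolding F_def by auto
    then show ?thesis by auto
  qed
  have "\<Inter>(F ` D) \<noteq> {}"
    using perfect_semilattice_ED(1)[OF B1] unfolding compact_space_fip using closed fip by blast
  then obtain q where q: "\<And>d. d \<in> D \<Longrightarrow> q \<in> F d" by auto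
  obtain d0 where "d0 \<in> D" using D(2) unfolding up_directed_def by auto
  then have qI: "q \<in> idems" "q \<notin> U" "sleq q s" using q unfolding F_def by auto
  have "\<forall>d\<in>D. sleq d q" using q unfolding F_def by auto
  then have "sleq s q" using D(3) qI unfolding is_sup_def by auto
  then have "q = s"
    using qI perfect_semilattice_ED(4)[OF B1 sI qI(1)] unfolding sleq_def by auto
  then show False using qI U by auto
qed

lemma subsemilattice_lower_bound_in_closure:
  assumes B1: "perfect_semilattice_E TYPE('a::{semigroup_mult,topological_space})"
    and W: "W \<subseteq> (idems::'a set)" "W \<noteq> {}" "\<forall>x\<in>W. \<forall>y\<in>W. x * y \<in> W"
  shows "\<exists>m \<in> top_of_set idems closure_of W. \<forall>w\<in>W. sleq m w"
proof -
  define F where "F w = (top_of_set idems closure_of W) \<inter> {x\<in>idems. sleq x w}" for w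
  have closed: "closedin (top_of_set idems) (F w)" if "w \<in> W" for w
    using that W(1) unfolding F_def
    by (intro closedin_Int closedin_closure_of closedin_sleq_below[OF B1]) auto
  have finite_lower_bound: "\<exists>z\<in>W. \<forall>g\<in>G. sleq z g" if "finite G" "G \<subseteq> W" for G
    using that
  proof (induction G rule: finite_induct)
    case empty
    then show ?case using W(2) by auto
  next
    case (insert x G)
    then obtain z where z: "z \<in> W" "\<forall>g\<in>G. sleq z g" by auto
    have xW: "x \<in> W" using insert by auto
    have "sleq (z * x) x" using W(1) xW unfolding sleq_def idems_def
      by (auto simp: mult.assoc)
    moreover have "sleq (z * x) g" if "g \<in> G" for g
    proof -
      have "x * g = g * x"
        using perfect_semilattice_ED(4)[OF B1, of x g] W(1) xW that insert.prems by auto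
      then have "z * x * g = z * g * x" by (simp add: mult.assoc)
      then show ?thesis using z that unfolding sleq_def by simp
    qed
    ultimately show ?case using W(3) z xW by auto
  qed
  have fip: "\<Inter>\<F> \<noteq> {}" if "finite \<F>" "\<F> \<subseteq> F ` W" for \<F>
  proof -
    from finite_subset_image[OF that] obtain G where G: "G \<subseteq> W" "finite G" "\<F> = F ` G"
      by blast
    obtain z where z: "z \<in> W" "\<forall>g\<in>G. sleq z g" using finite_lower_bound G by blast
    have "z \<in> top_of_set idems closure_of W"
      using closure_of_subset[of W "top_of_set idems"] W(1) z by auto
    then have "z \<in> \<Inter>\<F>" using z W(1) G unfolding F_def by auto
    then show ?thesis by auto
  qed
  have "\<Inter>(F ` W) \<noteq> {}"
    using perfect_semilattice_ED(1)[OF B1] unfolding compact_space_fip using closed fip by blast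
  then obtain q where q: "\<And>w. w \<in> W \<Longrightarrow> q \<in> F w" by auto
  obtain w0 where "w0 \<in> W" using W(2) by auto
  then show ?thesis using q unfolding F_def by auto
qed

lemma way_below_imp_sleq:
  assumes "x \<in> idems" "way_below b x"
  shows "sleq b x"
proof -
  have "up_directed {x}" "is_sup {x} x"
    using assms(1) unfolding up_directed_def is_sup_def sleq_def idems_def by auto
  then show ?thesis using assms sleq_refl unfolding way_below_def by blast
qed

definition nbhd_lower_bounds :: "'a::{semigroup_mult,topological_space} \<Rightarrow> 'a set" where
  "nbhd_lower_bounds e =
     {m\<in>idems. \<exists>W. openin (top_of_set idems) W \<and> e \<in> W \<and> (\<forall>w\<in>W. sleq m w)}"

lemma small_nhd_with_lower_bound_in_closure:
  assumes B1: "perfect_semilattice_E TYPE('a::{semigroup_mult,topological_space})"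
    and U: "openin (top_of_set idems) U" "(e::'a) \<in> U"
  obtains W m where "openin (top_of_set idems) W" "e \<in> W" "W \<subseteq> U"
    "m \<in> top_of_set idems closure_of W" "\<forall>w\<in>W. sleq m w"
proof -
  have "e \<in> idems" using openin_subset[OF U(1)] U(2) by auto
  then obtain V where V: "openin (top_of_set idems) V" "e \<in> V" "V \<subseteq> U" "\<forall>x\<in>V. \<forall>y\<in>V. x * y \<in> V"
    using perfect_semilattice_ED(6)[OF B1 _ U] by blast
  moreover have "V \<subseteq> idems" using openin_subset[OF V(1)] by simp
  ultimately show ?thesis
    using subsemilattice_lower_bound_in_closure[OF B1] that by blast
qed

lemma sleq_closure_of:
  assumes B1: "perfect_semilattice_E TYPE('a::{semigroup_mult,topological_space})"
    and "m' \<in> (idems::'a set)" "W \<subseteq> idems" "\<forall>w\<in>W. sleq m' w" "m \<in> top_of_set idems closure_of W"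
  shows "sleq m' m"
proof -
  have "top_of_set idems closure_of W \<subseteq> {x\<in>idems. sleq m' x}"
    using assms by (intro closure_of_minimal closedin_sleq_above) auto
  then show ?thesis using assms(5) by blast
qed

lemma nbhd_lower_boundsI:
  assumes "openin (top_of_set idems) W" "e \<in> W" "m \<in> top_of_set idems closure_of W"
    "\<forall>w\<in>W. sleq m w"
  shows "m \<in> nbhd_lower_bounds e"
  using assms closure_of_subset_topspace[of "top_of_set idems" W] unfolding nbhd_lower_bounds_def
  by auto

lemma up_directed_nbhd_lower_bounds:
  assumes B1: "perfect_semilattice_E TYPE('a::{semigroup_mult,topological_space})"
    and e: "(e::'a) \<in> idems"
  shows "up_directed (nbhd_lower_bounds e)"
  unfolding up_directed_def
proof (intro conjI ballI)
  have "openin (top_of_set idems) idems"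
    using openin_topspace[of "top_of_set (idems::'a set)"] by simp
  then obtain W m where "openin (top_of_set idems) W" "e \<in> W"
      "m \<in> top_of_set idems closure_of W" "\<forall>w\<in>W. sleq m w"
    using small_nhd_with_lower_bound_in_closure[OF B1 _ e] by metis
  then show "nbhd_lower_bounds e \<noteq> {}" using nbhd_lower_boundsI by blast
next
  fix m1 m2 assume m1: "m1 \<in> nbhd_lower_bounds e" and m2: "m2 \<in> nbhd_lower_bounds e"
  obtain W1 where W1: "openin (top_of_set idems) W1" "e \<in> W1" "\<forall>w\<in>W1. sleq m1 w"
    using m1 unfolding nbhd_lower_bounds_def by auto
  obtain W2 where W2: "openin (top_of_set idems) W2" "e \<in> W2" "\<forall>w\<in>W2. sleq m2 w"
    using m2 unfolding nbhd_lower_bounds_def by auto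
  have "openin (top_of_set idems) (W1 \<inter> W2)" "e \<in> W1 \<inter> W2" using W1 W2 by auto
  then obtain W m where W: "openin (top_of_set idems) W" "e \<in> W" "W \<subseteq> W1 \<inter> W2"
      "m \<in> top_of_set idems closure_of W" "\<forall>w\<in>W. sleq m w"
    by (rule small_nhd_with_lower_bound_in_closure[OF B1])
  have Widems: "W \<subseteq> idems" using openin_subset[OF W(1)] by simp
  have "m \<in> nbhd_lower_bounds e" using nbhd_lower_boundsI W(1,2,4,5) .
  moreover have "sleq m1 m"
    using m1 W(3) W1(3) Widems unfolding nbhd_lower_bounds_def
    by (intro sleq_closure_of[OF B1 _ Widems _ W(4)]) auto
  moreover have "sleq m2 m"
    using m2 W(3) W2(3) Widems unfolding nbhd_lower_bounds_def
    by (intro sleq_closure_of[OF B1 _ Widems _ W(4)]) auto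
  ultimately show "\<exists>z\<in>nbhd_lower_bounds e. sleq m1 z \<and> sleq m2 z" by blast
qed

text \<open>Regularity of the compact Hausdorff space \<open>idems\<close> separates \<open>e\<close> from the closed set
  of points below an upper bound \<open>u\<close> with \<open>e \<not>\<le> u\<close>.\<close>
lemma is_sup_nbhd_lower_bounds:
  assumes B1: "perfect_semilattice_E TYPE('a::{semigroup_mult,topological_space})"
    and e: "(e::'a) \<in> idems"
  shows "is_sup (nbhd_lower_bounds e) e"
  unfolding is_sup_def
proof (intro conjI e ballI impI)
  fix m assume "m \<in> nbhd_lower_bounds e"
  then show "sleq m e" unfolding nbhd_lower_bounds_def by auto
next
  fix u assume u: "u \<in> idems" "\<forall>x\<in>nbhd_lower_bounds e. sleq x u"
  show "sleq e u"
  proof (rule ccontr)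
    let ?X = "top_of_set (idems::'a set)"
    let ?C = "{x\<in>idems. sleq x u}"
    assume "\<not> sleq e u"
    then have "e \<in> topspace ?X - ?C" using e by auto
    moreover have "regular_space ?X"
      by (rule compact_Hausdorff_imp_regular_space[OF perfect_semilattice_ED(1,2)[OF B1]])
    ultimately have "\<exists>U V. openin ?X U \<and> openin ?X V \<and> e \<in> U \<and> ?C \<subseteq> V \<and> disjnt U V"
      using closedin_sleq_below[OF B1 u(1)] unfolding regular_space_def by blast
    then obtain U V where UV: "openin ?X U" "openin ?X V" "e \<in> U" "?C \<subseteq> V" "disjnt U V"
      by blast
    obtain W m where W: "openin ?X W" "e \<in> W" "W \<subseteq> U" "m \<in> ?X closure_of W" "\<forall>w\<in>W. sleq m w"
      using small_nhd_with_lower_bound_in_closure[OF B1 UV(1,3)] by blast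
    have "U \<subseteq> topspace ?X - V" using UV(5) openin_subset[OF UV(1)] unfolding disjnt_def by auto
    then have "?X closure_of U \<subseteq> topspace ?X - V"
      by (rule closure_of_minimal) (use UV(2) in auto)
    then have "m \<notin> V" using W(4) closure_of_mono[OF W(3)] by blast
    moreover have "m \<in> nbhd_lower_bounds e" using nbhd_lower_boundsI W by blast
    then have "m \<in> ?C" using u(2) unfolding nbhd_lower_bounds_def by auto
    ultimately show False using UV(4) by blast
  qed
qed

lemma way_below_on_nhd_above:
  assumes B1: "perfect_semilattice_E TYPE('a::{semigroup_mult,topological_space})"
    and W: "openin (top_of_set idems) W" "\<forall>w\<in>W. sleq m w"
    and bm: "sleq b m" and w: "(w::'a) \<in> W"
  shows "way_below b w"
  unfolding way_below_def
proof (intro allI impI)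
  fix D s assume D: "D \<subseteq> idems \<and> D \<noteq> {} \<and> up_directed D \<and> is_sup D s \<and> sleq w s"
  have wI: "w \<in> idems" using openin_subset[OF W(1)] w by auto
  have sI: "s \<in> idems" using D unfolding is_sup_def by auto
  let ?U = "{x \<in> topspace (top_of_set idems). x * w \<in> W}"
  have "openin (top_of_set idems) ?U"
    by (rule openin_continuous_map_preimage[OF continuous_map_idems_mult_right[OF B1 wI] W(1)])
  moreover have "s * w = w" using D perfect_semilattice_ED(4)[OF B1 wI sI] unfolding sleq_def by auto
  then have "s \<in> ?U" using sI w by auto
  ultimately obtain d where d: "d \<in> D" "d * w \<in> W"
    using up_directed_meets_nhd_of_sup[OF B1] D by blast
  have dI: "d \<in> idems" using d D by auto
  have "d * w * d = d * (d * w)"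
    using perfect_semilattice_ED(4)[OF B1 wI dI] by (simp add: mult.assoc)
  also have "\<dots> = d * w"
    using dI unfolding idems_def by (simp add: mult.assoc[symmetric])
  finally have dwd: "d * w * d = d * w" .
  have mdw: "m * (d * w) = m" using d W(2) unfolding sleq_def by auto
  have "m * d = m * (d * w) * d" by (simp add: mdw)
  also have "\<dots> = m * (d * w * d)" by (simp add: mult.assoc)
  also have "\<dots> = m" by (simp add: dwd mdw)
  finally have "m * d = m" .
  then have "b * d = b" using bm unfolding sleq_def by (metis mult.assoc)
  then show "\<exists>d\<in>D. sleq b d" using d(1) unfolding sleq_def by blast
qed

text \<open>The sets \<open>\<twoheaduparrow>b\<close> are open: \<open>e\<close> is the directed supremum of the elements lying
  below a whole neighbourhood of \<open>e\<close>, so \<open>b \<ll> e\<close> puts \<open>b\<close> below one of them.\<close>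
lemma way_below_open_nhd:
  assumes B1: "perfect_semilattice_E TYPE('a::{semigroup_mult,topological_space})"
    and e: "e \<in> (idems::'a set)" and wb: "way_below b e"
  obtains W where "openin (top_of_set idems) W" "e \<in> W" "\<forall>w\<in>W. way_below b w"
proof -
  have "nbhd_lower_bounds e \<subseteq> idems" "nbhd_lower_bounds e \<noteq> {}"
    using up_directed_nbhd_lower_bounds[OF B1 e] unfolding nbhd_lower_bounds_def up_directed_def
    by auto
  then obtain m where m: "m \<in> nbhd_lower_bounds e" "sleq b m"
    using wb up_directed_nbhd_lower_bounds[OF B1 e] is_sup_nbhd_lower_bounds[OF B1 e] sleq_refl[OF e]
    unfolding way_below_def by blast
  then obtain W where "openin (top_of_set idems) W" "e \<in> W" "\<forall>w\<in>W. sleq m w"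
    unfolding nbhd_lower_bounds_def by auto
  then show ?thesis using that way_below_on_nhd_above[OF B1] m(2) by blast
qed

lemma idems_mult_inverse:
  assumes "clifford_inverse_semigroup TYPE('a::{semigroup_mult,inverse})"
  shows "(x::'a) * inverse x \<in> idems"
proof -
  have "x * inverse x * x = x" using assms unfolding clifford_inverse_semigroup_def by blast
  then have "x * inverse x * (x * inverse x) = x * inverse x" by (metis mult.assoc)
  then show ?thesis unfolding idems_def by simp
qed

lemma in_grp_mult_inverse: "x \<in> grp (x * inverse x)"
  unfolding grp_def by simp

text \<open>The inverse of \<open>b x\<close> is \<open>x\<inverse> b\<close>, checked through the uniqueness of inverses.\<close>
lemma mult_in_grp_if_sleq:
  assumes Cl: "clifford_inverse_semigroup TYPE('a::{semigroup_mult,inverse,topological_space})"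
    and B1: "perfect_semilattice_E TYPE('a)"
    and b: "b \<in> (idems::'a set)" and le: "sleq b (x * inverse x)"
  shows "b * x \<in> grp b"
proof -
  define e where "e = x * inverse x"
  have eI: "e \<in> idems" unfolding e_def by (rule idems_mult_inverse[OF Cl])
  have be: "b * e = b" using le unfolding sleq_def e_def by simp
  have eb: "e * b = b" using be perfect_semilattice_ED(4)[OF B1 b eI] by simp
  have bb: "b * b = b" using b unfolding idems_def by simp
  have bbz: "b * (b * z) = b * z" for z by (simp add: mult.assoc[symmetric] bb)
  have xiz: "x * (inverse x * z) = e * z" for z by (simp add: e_def mult.assoc)
  have bez: "b * (e * z) = b * z" for z by (simp add: mult.assoc[symmetric] be)
  have ebz: "e * (b * z) = b * z" for z by (simp add: mult.assoc[symmetric] eb)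
  let ?y = "inverse x * b"
  have "b * x * ?y * (b * x) = b * x"
    by (simp add: mult.assoc bbz xiz bez ebz)
  moreover have "?y * (b * x) * ?y = ?y"
    by (simp add: mult.assoc bbz xiz bez ebz eb bb)
  ultimately have "?y = inverse (b * x)"
    using Cl unfolding clifford_inverse_semigroup_def by blast
  then have "b * x * inverse (b * x) = b * (x * (inverse x * b))" by (simp add: mult.assoc)
  also have "\<dots> = b" by (simp add: xiz eb bb)
  finally show ?thesis unfolding grp_def by simp
qed

lemma grp_eq_if_basis_projections_eq:
  assumes B3: "inverse_limit_preserving TYPE('a::{semigroup_mult,inverse,topological_space})"
    and basis: "is_basis B" and e: "(e::'a) \<in> idems"
    and xy: "x \<in> grp e" "y \<in> grp e"
    and proj: "\<And>b. b \<in> B \<Longrightarrow> way_below b e \<Longrightarrow> b * x = b * y"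
  shows "x = y"
proof -
  define D where "D = {b\<in>B. way_below b e}"
  have "D \<subseteq> idems \<and> D \<noteq> {} \<and> up_directed D \<and> is_sup D e"
    using basis e unfolding is_basis_def D_def up_directed_def by blast
  then have "homeomorphic_map (top_of_set (grp e))
      (subtopology (product_topology (\<lambda>b. top_of_set (grp b)) D) (inv_limit D))
      (\<lambda>g. restrict (\<lambda>b. b * g) D)"
    using B3 unfolding inverse_limit_preserving_def Let_def by blast
  then have "inj_on (\<lambda>g. restrict (\<lambda>b. b * g) D) (grp e)"
    using homeomorphic_imp_injective_map by fastforce
  moreover have "restrict (\<lambda>b. b * x) D = restrict (\<lambda>b. b * y) D"
    using proj unfolding D_def by (auto simp: restrict_def)
  ultimately show ?thesis using xy by (meson inj_onD)
qed

abbreviation half_series :: "(nat \<Rightarrow> real) \<Rightarrow> real" where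
  "half_series g \<equiv> \<Sum>k. (1/2::real) ^ Suc k * g k"

lemma image_atLeast_1: "f ` {1..} = range (\<lambda>j. f (Suc j))"
  by (metis One_nat_def atLeast_Suc_greaterThan greaterThan_0 image_image)

lemma half_series_bounds:
  fixes g :: "nat \<Rightarrow> real"
  assumes "\<And>k. 0 \<le> g k" "\<And>k. g k \<le> B"
  shows "summable (\<lambda>k. (1/2::real) ^ Suc k * g k)" "0 \<le> half_series g" "half_series g \<le> B"
proof -
  have geom: "(\<lambda>k. B * (1/2::real) ^ Suc k) sums B"
    using sums_mult[OF power_half_series, of B] by simp
  have le: "(1/2::real) ^ Suc k * g k \<le> B * (1/2) ^ Suc k" for k
    using assms(2)[of k] by (simp add: mult.commute)
  have nonneg: "0 \<le> (1/2::real) ^ Suc k * g k" for k using assms(1)[of k] by simp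
  show summable: "summable (\<lambda>k. (1/2::real) ^ Suc k * g k)"
    by (rule summable_comparison_test'[OF sums_summable[OF geom], of 0]) (use le nonneg in auto)
  show "0 \<le> half_series g" by (rule suminf_nonneg[OF summable nonneg])
  have "half_series g \<le> (\<Sum>k. B * (1/2::real) ^ Suc k)"
    by (rule suminf_le[OF le summable sums_summable[OF geom]])
  then show "half_series g \<le> B" using sums_unique[OF geom] by simp
qed

lemma half_series_triangle:
  fixes f g h :: "nat \<Rightarrow> real"
  assumes f: "\<And>k. 0 \<le> f k" "\<And>k. f k \<le> g k + h k"
    and g: "\<And>k. 0 \<le> g k" "\<And>k. g k \<le> B" and h: "\<And>k. 0 \<le> h k" "\<And>k. h k \<le> B"
  shows "half_series f \<le> half_series g + half_series h"
proof -
  have "f k \<le> B + B" for k using f(2)[of k] g(2)[of k] h(2)[of k] by linarith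
  then have sf: "summable (\<lambda>k. (1/2::real) ^ Suc k * f k)"
    using half_series_bounds(1) f(1) by blast
  have sg: "summable (\<lambda>k. (1/2::real) ^ Suc k * g k)" by (rule half_series_bounds(1)[OF g])
  have sh: "summable (\<lambda>k. (1/2::real) ^ Suc k * h k)" by (rule half_series_bounds(1)[OF h])
  have "half_series f \<le> (\<Sum>k. (1/2::real) ^ Suc k * g k + (1/2) ^ Suc k * h k)"
    using f(2) by (intro suminf_le sf summable_add sg sh) (simp add: distrib_left[symmetric])
  also have "\<dots> = half_series g + half_series h" by (rule suminf_add[OF sg sh, symmetric])
  finally show ?thesis .
qed

lemma half_series_eq_0_iff:
  fixes g :: "nat \<Rightarrow> real"
  assumes "\<And>k. 0 \<le> g k" "\<And>k. g k \<le> B"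
  shows "half_series g = 0 \<longleftrightarrow> (\<forall>k. g k = 0)"
  using suminf_eq_zero_iff[OF half_series_bounds(1)[OF assms]] assms(1) by simp

lemma (in Metric_space) eq_if_dist_eq_on_dense:
  assumes dense: "mtopology closure_of T = M" and T: "T \<subseteq> M"
    and pq: "p \<in> M" "q \<in> M" and eq: "\<forall>z\<in>T. d p z = d q z"
  shows "p = q"
proof -
  have less: "d p q < 2 * r" if "r > 0" for r
  proof -
    obtain z where z: "z \<in> T" "d p z < r"
      using pq(1) dense \<open>r > 0\<close> unfolding metric_closure_of by fastforce
    then have "d p q \<le> d p z + d z q" using triangle pq T by blast
    then show ?thesis using eq z commute[of z q] by auto
  qed
  have "d p q = 0" using less[of "d p q / 2"] nonneg[of p q] by linarith
  then show ?thesis using pq by simp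
qed

lemma idems_minus_way_above_nonempty:
  assumes "\<not> (\<forall>x\<in>idems. sleq b x)"
  shows "idems - {x\<in>idems. way_below b x} \<noteq> {}"
  using assms way_below_imp_sleq by blast

lemma acoef_bounds:
  assumes M: "Metric_space idems \<rho>" and le1: "\<forall>e\<in>idems. \<forall>f\<in>idems. \<rho> e f \<le> 1"
    and e: "e \<in> idems"
  shows "0 \<le> acoef \<rho> b e" "acoef \<rho> b e \<le> 1"
proof -
  let ?A = "idems - {x\<in>idems. way_below b x}"
  have "0 \<le> pdist \<rho> e ?A \<and> pdist \<rho> e ?A \<le> 1" if A: "?A \<noteq> {}"
  proof -
    obtain a where a: "a \<in> ?A" using A by blast
    have nonneg: "\<forall>y\<in>\<rho> e ` ?A. 0 \<le> y" using Metric_space.nonneg[OF M] by auto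
    have "0 \<le> Inf (\<rho> e ` ?A)" by (rule cInf_greatest) (use A nonneg in auto)
    moreover have "Inf (\<rho> e ` ?A) \<le> \<rho> e a"
      by (rule cInf_lower) (use a nonneg in \<open>auto simp: bdd_below_def\<close>)
    ultimately show ?thesis using le1 e a unfolding pdist_def by force
  qed
  then show "0 \<le> acoef \<rho> b e" "acoef \<rho> b e \<le> 1"
    using idems_minus_way_above_nonempty unfolding acoef_def by auto
qed

text \<open>Positivity of \<open>a\<^sub>b\<close> on \<open>\<twoheaduparrow>b\<close> rests on this set being open.\<close>
lemma acoef_pos:
  assumes B1: "perfect_semilattice_E TYPE('a::{semigroup_mult,topological_space})"
    and cm: "compatible_metric (idems::'a set) \<rho>" and e: "e \<in> (idems::'a set)"
    and wb: "way_below b e"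
  shows "0 < acoef \<rho> b e"
proof (cases "\<forall>x\<in>idems. sleq b x")
  case True
  then show ?thesis by (simp add: acoef_def)
next
  case False
  let ?A = "idems - {x\<in>idems. way_below b x}"
  interpret Metric_space idems \<rho> using cm unfolding compatible_metric_def by blast
  obtain W where W: "openin (top_of_set idems) W" "e \<in> W" "\<forall>w\<in>W. way_below b w"
    using way_below_open_nhd[OF B1 e wb] by blast
  have "openin mtopology W" using W(1) cm unfolding compatible_metric_def by simp
  then obtain r where r: "r > 0" "mball e r \<subseteq> W" using W(2) unfolding openin_mtopology by blast
  have "\<forall>y\<in>\<rho> e ` ?A. r \<le> y"
  proof
    fix y assume "y \<in> \<rho> e ` ?A"
    then obtain a where a: "a \<in> ?A" "y = \<rho> e a" by blast
    then have "a \<notin> mball e r" using W(3) r(2) by blast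
    then show "r \<le> y" using a e by auto
  qed
  then have "r \<le> Inf (\<rho> e ` ?A)"
    using idems_minus_way_above_nonempty[OF False] by (intro cInf_greatest) auto
  then show ?thesis using False r by (simp add: acoef_def pdist_def)
qed

locale clifford_metric_construction =
  fixes \<rho> :: "'a::{semigroup_mult,inverse,topological_space} \<Rightarrow> 'a \<Rightarrow> real"
    and bs :: "nat \<Rightarrow> 'a"
    and db :: "'a \<Rightarrow> 'a \<Rightarrow> 'a \<Rightarrow> real"
    and c :: "'a \<Rightarrow> 'a"
    and t :: "'a \<Rightarrow> nat \<Rightarrow> 'a"
  assumes clifford: "clifford_inverse_semigroup TYPE('a)"
    and perfect: "perfect_semilattice_E TYPE('a)"
    and inverse_limits: "inverse_limit_preserving TYPE('a)"
    and rho_compatible: "compatible_metric idems \<rho>"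
    and rho_le_1: "\<forall>e\<in>idems. \<forall>f\<in>idems. \<rho> e f \<le> 1"
    and basis: "is_basis (bs ` {1..})"
    and db_compatible: "\<And>b. b \<in> bs ` {1..} \<Longrightarrow> compatible_metric (grp b) (db b)"
    and db_le_1: "\<And>b x y. b \<in> bs ` {1..} \<Longrightarrow> x \<in> grp b \<Longrightarrow> y \<in> grp b \<Longrightarrow> db b x y \<le> 1"
    and c_in_grp: "\<And>b. b \<in> bs ` {1..} \<Longrightarrow> c b \<in> grp b"
    and t_in_grp: "\<And>b k. b \<in> bs ` {1..} \<Longrightarrow> k \<ge> 1 \<Longrightarrow> t b k \<in> grp b"
    and t_dense: "\<And>b. b \<in> bs ` {1..} \<Longrightarrow> top_of_set (grp b) closure_of (t b ` {1..}) = grp b"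
begin

definition acoord :: "'a \<Rightarrow> 'a \<Rightarrow> real" where
  "acoord b x = acoef \<rho> b (x * inverse x)"

definition dcoord :: "'a \<Rightarrow> 'a \<Rightarrow> nat \<Rightarrow> real" where
  "dcoord b x k = acoord b x * db b (phat c (x * inverse x) b x) (t b (Suc k))"

lemma Pb_eq:
  "Pb \<rho> db c t b x y = \<bar>acoord b x - acoord b y\<bar> + half_series (\<lambda>k. \<bar>dcoord b x k - dcoord b y k\<bar>)"
  unfolding Pb_def Let_def acoord_def dcoord_def by simp

lemma rho_metric: "Metric_space idems \<rho>"
  using rho_compatible unfolding compatible_metric_def by blast

lemma basis_subset_idems: "bs ` {1..} \<subseteq> idems"
  using basis unfolding is_basis_def by blast

lemma acoord_bounds: "0 \<le> acoord b x" "acoord b x \<le> 1"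
  unfolding acoord_def using acoef_bounds[OF rho_metric rho_le_1 idems_mult_inverse[OF clifford]]
  by auto

lemma phat_in_grp:
  assumes "b \<in> bs ` {1..}"
  shows "phat c (x * inverse x) b x \<in> grp b"
  using mult_in_grp_if_sleq[OF clifford perfect, of b x] c_in_grp[OF assms]
    basis_subset_idems assms
  unfolding phat_def by auto

lemma dcoord_bounds:
  assumes b: "b \<in> bs ` {1..}"
  shows "0 \<le> dcoord b x k" "dcoord b x k \<le> 1"
proof -
  have t: "t b (Suc k) \<in> grp b" using t_in_grp[OF b] by simp
  interpret Metric_space "grp b" "db b"
    using db_compatible[OF b] unfolding compatible_metric_def by blast
  have "0 \<le> db b (phat c (x * inverse x) b x) (t b (Suc k))"
    "db b (phat c (x * inverse x) b x) (t b (Suc k)) \<le> 1"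
    using db_le_1[OF b phat_in_grp[OF b] t] by auto
  then show "0 \<le> dcoord b x k" "dcoord b x k \<le> 1"
    unfolding dcoord_def using acoord_bounds[of b x] by (auto simp: mult_le_one)
qed

lemma dcoord_dist_bounds:
  assumes "b \<in> bs ` {1..}"
  shows "0 \<le> \<bar>dcoord b x k - dcoord b y k\<bar>" "\<bar>dcoord b x k - dcoord b y k\<bar> \<le> 1"
  using dcoord_bounds[OF assms, of x k] dcoord_bounds[OF assms, of y k] by auto

lemma Pb_bounds:
  assumes "b \<in> bs ` {1..}"
  shows "0 \<le> Pb \<rho> db c t b x y" "Pb \<rho> db c t b x y \<le> 2"
  using half_series_bounds(2,3)[of "\<lambda>k. \<bar>dcoord b x k - dcoord b y k\<bar>" 1]
    dcoord_dist_bounds[OF assms]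
    acoord_bounds[of b x] acoord_bounds[of b y]
  unfolding Pb_eq by auto

lemma Pb_commute: "Pb \<rho> db c t b x y = Pb \<rho> db c t b y x"
  unfolding Pb_eq by (simp add: abs_minus_commute)

lemma Pb_self: "Pb \<rho> db c t b x x = 0"
  unfolding Pb_eq by simp

lemma Pb_triangle:
  assumes "b \<in> bs ` {1..}"
  shows "Pb \<rho> db c t b x z \<le> Pb \<rho> db c t b x y + Pb \<rho> db c t b y z"
proof -
  have "half_series (\<lambda>k. \<bar>dcoord b x k - dcoord b z k\<bar>)
      \<le> half_series (\<lambda>k. \<bar>dcoord b x k - dcoord b y k\<bar>) + half_series (\<lambda>k. \<bar>dcoord b y k - dcoord b z k\<bar>)"
    using dcoord_dist_bounds[OF assms] by (intro half_series_triangle) auto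
  then show ?thesis unfolding Pb_eq by linarith
qed

text \<open>Since \<open>a\<^sub>b(e) > 0\<close> for \<open>b \<ll> e\<close>, vanishing of \<open>P\<^sub>b\<close> says that \<open>b x\<close> and \<open>b y\<close> have the
  same distances to the dense sequence \<open>t\<^sub>b\<close>.\<close>
lemma mult_eq_if_Pb_eq_0:
  assumes b: "b \<in> bs ` {1..}" and P0: "Pb \<rho> db c t b x y = 0"
    and same_idem: "x * inverse x = y * inverse y" and wb: "way_below b (x * inverse x)"
  shows "b * x = b * y"
proof -
  let ?e = "x * inverse x"
  have eI: "?e \<in> idems" by (rule idems_mult_inverse[OF clifford])
  have "half_series (\<lambda>k. \<bar>dcoord b x k - dcoord b y k\<bar>) = 0"
    using P0 half_series_bounds(2)[of "\<lambda>k. \<bar>dcoord b x k - dcoord b y k\<bar>" 1]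
      dcoord_dist_bounds[OF b] unfolding Pb_eq by force
  then have dcoord_eq: "dcoord b x k = dcoord b y k" for k
    using half_series_eq_0_iff[of "\<lambda>k. \<bar>dcoord b x k - dcoord b y k\<bar>" 1]
      dcoord_dist_bounds[OF b] by auto
  have le: "sleq b ?e" by (rule way_below_imp_sleq[OF eI wb])
  have apos: "0 < acoord b x" unfolding acoord_def by (rule acoef_pos[OF perfect rho_compatible eI wb])
  have "acoord b y = acoord b x" unfolding acoord_def same_idem ..
  then have dist_eq: "db b (b * x) (t b (Suc k)) = db b (b * y) (t b (Suc k))" for k
    using dcoord_eq[of k] apos le same_idem unfolding dcoord_def phat_def by simp
  interpret Metric_space "grp b" "db b"
    using db_compatible[OF b] unfolding compatible_metric_def by blast
  show ?thesis
  proof (rule eq_if_dist_eq_on_dense)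
    show "mtopology closure_of (t b ` {1..}) = grp b"
      using db_compatible[OF b] t_dense[OF b] unfolding compatible_metric_def by simp
    show "t b ` {1..} \<subseteq> grp b" using t_in_grp[OF b] by auto
    show "b * x \<in> grp b" "b * y \<in> grp b"
      using mult_in_grp_if_sleq[OF clifford perfect] basis_subset_idems b le same_idem by auto
    show "\<forall>z\<in>t b ` {1..}. db b (b * x) z = db b (b * y) z"
      using dist_eq unfolding image_atLeast_1 by auto
  qed
qed

lemma Pb_basis_bounds: "0 \<le> Pb \<rho> db c t (bs (Suc j)) x y" "Pb \<rho> db c t (bs (Suc j)) x y \<le> 2"
  using Pb_bounds[of "bs (Suc j)"] by auto

lemma dmet_bounds: "0 \<le> dmet \<rho> bs db c t x y" "dmet \<rho> bs db c t x y \<le> 3"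
proof -
  let ?e = "x * inverse x" and ?f = "y * inverse y"
  have "0 \<le> \<rho> ?e ?f" "\<rho> ?e ?f \<le> 1"
    using Metric_space.nonneg[OF rho_metric] rho_le_1 idems_mult_inverse[OF clifford] by auto
  moreover have "0 \<le> half_series (\<lambda>j. Pb \<rho> db c t (bs (Suc j)) x y)"
    "half_series (\<lambda>j. Pb \<rho> db c t (bs (Suc j)) x y) \<le> 2"
    using half_series_bounds(2,3)[of "\<lambda>j. Pb \<rho> db c t (bs (Suc j)) x y" 2] Pb_basis_bounds by auto
  ultimately show "0 \<le> dmet \<rho> bs db c t x y" "dmet \<rho> bs db c t x y \<le> 3"
    unfolding dmet_def by auto
qed

lemma dmet_commute: "dmet \<rho> bs db c t x y = dmet \<rho> bs db c t y x"
  unfolding dmet_def using Pb_commute Metric_space.commute[OF rho_metric] by simp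

lemma dmet_self: "dmet \<rho> bs db c t x x = 0"
  unfolding dmet_def using Pb_self Metric_space.zero[OF rho_metric] idems_mult_inverse[OF clifford]
  by simp

lemma dmet_triangle: "dmet \<rho> bs db c t x z \<le> dmet \<rho> bs db c t x y + dmet \<rho> bs db c t y z"
proof -
  have "half_series (\<lambda>j. Pb \<rho> db c t (bs (Suc j)) x z)
      \<le> half_series (\<lambda>j. Pb \<rho> db c t (bs (Suc j)) x y) + half_series (\<lambda>j. Pb \<rho> db c t (bs (Suc j)) y z)"
    using Pb_basis_bounds Pb_triangle by (intro half_series_triangle) auto
  moreover have "\<rho> (x * inverse x) (z * inverse z) \<le> \<rho> (x * inverse x) (y * inverse y) + \<rho> (y * inverse y) (z * inverse z)"
    using Metric_space.triangle[OF rho_metric] idems_mult_inverse[OF clifford] by blast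
  ultimately show ?thesis unfolding dmet_def by linarith
qed

lemma eq_if_dmet_eq_0:
  assumes d0: "dmet \<rho> bs db c t x y = 0"
  shows "x = y"
proof -
  let ?e = "x * inverse x" and ?f = "y * inverse y"
  have eI: "?e \<in> idems" and fI: "?f \<in> idems" by (rule idems_mult_inverse[OF clifford])+
  have series_nonneg: "0 \<le> half_series (\<lambda>j. Pb \<rho> db c t (bs (Suc j)) x y)"
    using half_series_bounds(2)[of "\<lambda>j. Pb \<rho> db c t (bs (Suc j)) x y" 2] Pb_basis_bounds by auto
  then have "\<rho> ?e ?f = 0"
    using d0 Metric_space.nonneg[OF rho_metric, of ?e ?f] unfolding dmet_def by linarith
  then have same_idem: "?e = ?f" using Metric_space.zero[OF rho_metric eI fI] by simp
  have "half_series (\<lambda>j. Pb \<rho> db c t (bs (Suc j)) x y) = 0"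
    using d0 series_nonneg Metric_space.nonneg[OF rho_metric, of ?e ?f] unfolding dmet_def by linarith
  then have "Pb \<rho> db c t (bs (Suc j)) x y = 0" for j
    using half_series_eq_0_iff[of "\<lambda>j. Pb \<rho> db c t (bs (Suc j)) x y" 2] Pb_basis_bounds by auto
  then have P0: "Pb \<rho> db c t b x y = 0" if "b \<in> bs ` {1..}" for b
    using that unfolding image_atLeast_1 by auto
  show "x = y"
  proof (rule grp_eq_if_basis_projections_eq[OF inverse_limits basis eI])
    show "x \<in> grp ?e" "y \<in> grp ?e" using in_grp_mult_inverse[of x] in_grp_mult_inverse[of y] same_idem
      by simp_all
    show "b * x = b * y" if "b \<in> bs ` {1..}" "way_below b ?e" for b
      using mult_eq_if_Pb_eq_0 P0 that same_idem by blast
  qed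
qed

lemma Metric_space_dmet: "Metric_space UNIV (dmet \<rho> bs db c t)"
  unfolding Metric_space_def
  using dmet_bounds(1) dmet_commute dmet_triangle dmet_self eq_if_dmet_eq_0 by metis

end

theorem lemma4p13:
  fixes \<rho> :: "'a::{semigroup_mult,inverse,topological_space} \<Rightarrow> 'a \<Rightarrow> real"
    and bs :: "nat \<Rightarrow> 'a"
    and db :: "'a \<Rightarrow> 'a \<Rightarrow> 'a \<Rightarrow> real"
    and c :: "'a \<Rightarrow> 'a"
    and t :: "'a \<Rightarrow> nat \<Rightarrow> 'a"
  assumes S: "compact_hausdorff_topological_semigroup TYPE('a)"
    and Cl: "clifford_inverse_semigroup TYPE('a)"
    and B1: "perfect_semilattice_E TYPE('a)" "metrizable_space (top_of_set (idems::'a set))"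
    and B2: "\<forall>e\<in>(idems::'a set). compact (grp e) \<and> metrizable_space (top_of_set (grp e))"
    and B3: "inverse_limit_preserving TYPE('a)"
    and rho: "compatible_metric idems \<rho>" "\<forall>e\<in>idems. \<forall>f\<in>idems. \<rho> e f \<le> 1"
    and basis: "is_basis (bs ` {1..})"
    and dbm: "\<forall>b\<in>bs ` {1..}. compatible_metric (grp b) (db b) \<and> (\<forall>x\<in>grp b. \<forall>y\<in>grp b. db b x y \<le> 1)"
    and cb: "\<forall>b\<in>bs ` {1..}. c b \<in> grp b"
    and tb: "\<forall>b\<in>bs ` {1..}. (\<forall>k\<ge>1. t b k \<in> grp b) \<and> (top_of_set (grp b)) closure_of (t b ` {1..}) = grp b"
  shows "Metric_space (UNIV::'a set) (dmet \<rho> bs db c t)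
         \<and> (\<forall>x y. 0 \<le> dmet \<rho> bs db c t x y \<and> dmet \<rho> bs db c t x y \<le> 3)"
proof -
  interpret clifford_metric_construction \<rho> bs db c t
    using Cl B1(1) B3 rho basis dbm cb tb by unfold_locales auto
  show ?thesis using Metric_space_dmet dmet_bounds by blast
qed

end
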